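(* Let $n_1, n_2 \ge 1$ and $n$ be integers with $n_1 + n_2 \le n$, and let $\lambda_1, \lambda_2 \ge 0$ and $Q \ge 1$ be reals. Let $P_1, P_2 \in \mathbb{Z}[x]$ with $\deg P_1 = n_1$, $H(P_1) \le Q^{\lambda_1}$, $\deg P_2 = n_2$, $H(P_2) \le Q^{\lambda_2}$, and suppose $P_1$ and $P_2$ have no common (complex) root. For $i = 1,2$ and $j \ge 0$ write $\bar P_i^{(j)}(x) = P_i^{(j)}(x)\, Q^{-\lambda_i}$ (with $\bar P_i^{(j)} = 0$ for $j<0$). (a) Let $\xi \in \left(-\tfrac12,\tfrac12\right)$ and let $k$ be an integer with $1 \le k \le n_1+n_2$. Define the $(n_1+n_2)\times k$ real matrix $M = (M_{r,s})$ by $M_{i,s} = |\bar P_1^{(s-i)}(\xi)|$ for $1 \le i \le n_2$, $1\le s\le k$, and $M_{n_2+i,s} = |\bar P_2^{(s-i)}(\xi)|$ for $1 \le i \le n_1$, $1 \le s \le k$ (so entries with $s<i$ are $0$). Let \[ \operatorname{perm} M = \sum_{\sigma} \prod_{s=1}^{k} M_{\sigma(s),s}, \] the sum being over all injective maps $\sigma : \{1,\dots,k\} \to \{1,\dots,n_1+n_2\}$. Then \[ 1 \le c(n)\, \operatorname{perm}(M)\, Q^{\,n_1\lambda_2 + n_2 \lambda_1}, \] where $c(n)>0$ depends only on $n$. (b) Suppose moreover that $n_1 + n_2 \ge 3$, and that there exist reals $\tau_1,\tau_2$, $\eta > 0$ and an interval $I \subseteq \left(-\tfrac12,\tfrac12\right)$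 of length $Q^{-\eta}$ such that $|P_i(\xi)| \le Q^{-\tau_i}$ for $i=1,2$ and all $\xi \in I$. Then for every $\delta > 0$ there is $Q_0(n,\delta)$ such that for all $Q > Q_0(n,\delta)$, \[ 3 \min\{\tau_1 + \lambda_1,\ \tau_2 + \lambda_2\} - 2\eta < n_1 \lambda_2 + n_2 \lambda_1 + \delta . \]
   Context: For a polynomial $P(x) = a_m x^m + \dots + a_0$, its height is $H(P) = \max_i |a_i|$. $P^{(j)}$ denotes the $j$-th derivative, $P^{(0)} = P$. *)

theory Defs
  imports "HOL-Analysis.Analysis" "HOL-Computational_Algebra.Polynomial" "HOL-Library.FuncSet"
begin

definition height :: "int poly \<Rightarrow> int" where
  "height P = Max ((\<lambda>i. \<bar>coeff P i\<bar>) ` {0..degree P})"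

definition pbar :: "int poly \<Rightarrow> real \<Rightarrow> real \<Rightarrow> int \<Rightarrow> real \<Rightarrow> real" where
  "pbar P lam Q j x =
     (if j < 0 then 0
      else poly (map_poly real_of_int ((pderiv ^^ nat j) P)) x * Q powr (- lam))"

text \<open>The (n1+n2) x k matrix M of part (a), rows and columns indexed from 1.\<close>
definition matM :: "nat \<Rightarrow> nat \<Rightarrow> int poly \<Rightarrow> int poly \<Rightarrow> real \<Rightarrow> real \<Rightarrow> real \<Rightarrow> real
                     \<Rightarrow> nat \<Rightarrow> nat \<Rightarrow> real" where
  "matM n1 n2 P1 P2 lam1 lam2 Q \<xi> r s =
     (if r \<le> n2 then \<bar>pbar P1 lam1 Q (int s - int r) \<xi>\<bar>
      else \<bar>pbar P2 lam2 Q (int s - int (r - n2)) \<xi>\<bar>)"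

definition perm_rect :: "nat \<Rightarrow> nat \<Rightarrow> (nat \<Rightarrow> nat \<Rightarrow> real) \<Rightarrow> real" where
  "perm_rect N k M =
     (\<Sum>\<sigma> \<in> {\<sigma>. \<sigma> \<in> {1..k} \<rightarrow>\<^sub>E {1..N} \<and> inj_on \<sigma> {1..k}}. \<Prod>s=1..k. M (\<sigma> s) s)"

end

theory Submission
  imports Defs "Jordan_Normal_Form.Char_Poly"
    "HOL-Computational_Algebra.Fundamental_Theorem_Algebra" "HOL-Computational_Algebra.Field_as_Ring"
begin

text \<open>Since \<open>P1\<close> and \<open>P2\<close> have no common root, the Sylvester system formed by the polynomials
  \<open>(x - x0)^i P1\<close> (\<open>i < n2\<close>) and \<open>(x - x0)^t P2\<close> (\<open>t < n1\<close>) has a nonzero integer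
  determinant, hence one of absolute value at least \<open>1\<close>; it does not depend on the centre \<open>x0\<close>,
  nor does it change when the coefficient columns are recombined by a unitriangular matrix.
  Bounding the Leibniz expansion termwise gives \<open>1 \<le> \<Sum>\<sigma> \<Prod>c |entry (\<sigma> c, c)|\<close>.

  For (a) the columns are the Taylor coefficients at \<open>\<xi>\<close>, i.e. \<open>P_i^(j)(\<xi>) / j!\<close>: the first \<open>k\<close>
  columns of each product appear in the permanent of \<open>M\<close>, the others are bounded in terms of \<open>n\<close>,
  and the factors \<open>Q^\<lambda>i\<close> multiply to \<open>Q^(n1 \<lambda>2 + n2 \<lambda>1)\<close> along any permutation.

  For (b) the first three columns are read through the value and two finite differences with step
  \<open>h = |I| / 4\<close> at nodes of \<open>I\<close>, each bounded by \<open>Q^-\<tau>i / h^c\<close>; at least one of the three rows is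
  divisible by \<open>x - y0\<close>, which gains back a factor \<open>h\<close>.  This yields
  \<open>1 \<le> C(n) Q^(n1 \<lambda>2 + n2 \<lambda>1 - 3 min (\<tau>i + \<lambda>i) + 2 \<eta>)\<close>, and a large \<open>Q\<close> absorbs \<open>C(n)\<close>.\<close>

lemma height_nonneg: "0 \<le> height P"
  unfolding height_def by (rule order.trans[OF abs_ge_zero Max_ge[of _ "\<bar>coeff P 0\<bar>"]]) auto

lemma abs_coeff_le_height: "\<bar>coeff P i\<bar> \<le> height P"
proof (cases "i \<le> degree P")
  case True thus ?thesis unfolding height_def by (intro Max_ge) auto
next
  case False thus ?thesis using height_nonneg[of P] by (simp add: coeff_eq_0)
qed

lemma abs_coeff_higher_pderiv_le:
  fixes p :: "real poly"
  assumes "\<And>i. \<bar>coeff p i\<bar> \<le> H"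
  shows "\<bar>coeff ((pderiv ^^ j) p) i\<bar> \<le> real (degree p) ^ j * H"
proof (induction j arbitrary: i)
  case 0 thus ?case using assms by simp
next
  case (Suc j)
  show ?case
  proof (cases "Suc i \<le> degree p")
    case True
    have "\<bar>coeff ((pderiv ^^ Suc j) p) i\<bar> = real (Suc i) * \<bar>coeff ((pderiv ^^ j) p) (Suc i)\<bar>"
      by (simp add: coeff_pderiv abs_mult)
    also have "\<dots> \<le> real (degree p) * (real (degree p) ^ j * H)"
      using True Suc[of "Suc i"] by (intro mult_mono) auto
    finally show ?thesis by simp
  next
    case False
    hence "coeff ((pderiv ^^ j) p) (Suc i) = 0"
      by (intro coeff_eq_0) (simp add: degree_higher_pderiv)
    moreover have "0 \<le> real (degree p) ^ Suc j * H"
      using order.trans[OF abs_ge_zero assms[of 0]] by simp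
    ultimately show ?thesis by (simp add: coeff_pderiv)
  qed
qed

lemma abs_poly_higher_pderiv_le:
  fixes p :: "real poly"
  assumes "\<And>i. \<bar>coeff p i\<bar> \<le> H" "\<bar>x\<bar> \<le> 1"
  shows "\<bar>poly ((pderiv ^^ j) p) x\<bar> \<le> real (degree p + 1) * real (degree p) ^ j * H"
proof -
  let ?q = "(pderiv ^^ j) p"
  have "\<bar>poly ?q x\<bar> \<le> (\<Sum>i\<le>degree ?q. \<bar>coeff ?q i * x ^ i\<bar>)"
    unfolding poly_altdef by (rule sum_abs)
  also have "\<dots> \<le> (\<Sum>i\<le>degree p. \<bar>coeff ?q i * x ^ i\<bar>)"
    by (rule sum_mono2) (auto simp: degree_higher_pderiv)
  also have "\<dots> \<le> (\<Sum>i\<le>degree p. real (degree p) ^ j * H)"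
  proof (rule sum_mono)
    fix i
    have "\<bar>coeff ?q i * x ^ i\<bar> = \<bar>coeff ?q i\<bar> * \<bar>x\<bar> ^ i" by (simp add: abs_mult power_abs)
    also have "\<dots> \<le> (real (degree p) ^ j * H) * 1"
      using abs_coeff_higher_pderiv_le[OF assms(1)] assms(2) order.trans[OF abs_ge_zero assms(1)[of 0]]
      by (intro mult_mono) (auto simp: power_le_one)
    finally show "\<bar>coeff ?q i * x ^ i\<bar> \<le> real (degree p) ^ j * H" by simp
  qed
  also have "\<dots> = real (degree p + 1) * real (degree p) ^ j * H" by simp
  finally show ?thesis .
qed

definition deriv_bound :: "nat \<Rightarrow> real" where
  "deriv_bound n = real (n + 1) * real n ^ n"

lemma deriv_bound_pos: "0 < deriv_bound n"
  unfolding deriv_bound_def by (cases "n = 0") auto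

lemma one_le_deriv_bound: "1 \<le> n \<Longrightarrow> 1 \<le> deriv_bound n"
  unfolding deriv_bound_def using one_le_power[of "real n" n] by (simp add: mult_ge1_I)

lemma abs_pbar_le_deriv_bound:
  assumes "degree P \<le> n" "real_of_int (height P) \<le> Q powr lam" "Q > 0" "\<bar>x\<bar> \<le> 1" "j \<le> int n"
    "1 \<le> n"
  shows "\<bar>pbar P lam Q j x\<bar> \<le> deriv_bound n"
proof (cases "j < 0")
  case True thus ?thesis using one_le_deriv_bound[OF assms(6)] by (simp add: pbar_def)
next
  case False
  define p :: "real poly" where "p = of_int_poly P"
  have cp: "\<bar>coeff p i\<bar> \<le> real_of_int (height P)" for i
    unfolding p_def using abs_coeff_le_height[of P i] by (simp add: coeff_map_poly)
  have dp: "degree p = degree P" unfolding p_def by simp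
  have "\<bar>poly ((pderiv ^^ nat j) p) x\<bar>
      \<le> real (degree p + 1) * real (degree p) ^ nat j * real_of_int (height P)"
    by (rule abs_poly_higher_pderiv_le[OF cp assms(4)])
  also have "\<dots> \<le> deriv_bound n * Q powr lam"
    unfolding deriv_bound_def
  proof (intro mult_mono)
    have "real (degree p) ^ nat j \<le> real n ^ nat j" using assms(1) dp by (intro power_mono) auto
    also have "\<dots> \<le> real n ^ n" using assms(5,6) False by (intro power_increasing) auto
    finally show "real (degree p) ^ nat j \<le> real n ^ n" .
  qed (use assms(1,2) dp height_nonneg[of P] in auto)
  finally have "\<bar>poly ((pderiv ^^ nat j) p) x\<bar> * Q powr (- lam) \<le> deriv_bound n"
    using assms(3) by (simp add: powr_minus divide_simps)
  thus ?thesis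
    using False by (simp add: pbar_def p_def of_int_hom.map_poly_higher_pderiv abs_mult)
qed

lemma matM_le_deriv_bound:
  assumes "degree P1 \<le> n" "degree P2 \<le> n" "real_of_int (height P1) \<le> Q powr lam1"
    "real_of_int (height P2) \<le> Q powr lam2" "Q > 0" "\<bar>x\<bar> \<le> 1" "s \<le> n" "1 \<le> n"
  shows "matM n1 n2 P1 P2 lam1 lam2 Q x r s \<le> deriv_bound n"
  unfolding matM_def using assms by (auto intro!: abs_pbar_le_deriv_bound)

lemma higher_pderiv_pcompose_linear:
  "(pderiv ^^ j) (p \<circ>\<^sub>p [:x0, 1:]) = ((pderiv ^^ j) p) \<circ>\<^sub>p [:x0, 1:]"
  by (induction j) (auto simp: pderiv_pcompose pderiv_pCons)

lemma coeff_pcompose_linear_mult_fact: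
  fixes p :: "'a :: {idom, semiring_char_0} poly"
  shows "coeff (p \<circ>\<^sub>p [:x0, 1:]) j * fact j = poly ((pderiv ^^ j) p) x0"
proof -
  have "poly ((pderiv ^^ j) p) x0 = coeff ((pderiv ^^ j) (p \<circ>\<^sub>p [:x0, 1:])) 0"
    by (simp add: higher_pderiv_pcompose_linear coeff_pcompose_0)
  thus ?thesis by (simp add: coeff_higher_pderiv pochhammer_fact mult.commute)
qed

lemma pcompose_monom: "monom c b \<circ>\<^sub>p r = Polynomial.smult c (r ^ b)"
  by (induction b) (auto simp: monom_Suc pcompose_pCons monom_0)

lemma coeff_pcompose_eq_sum:
  fixes p r :: "'a :: comm_semiring_1 poly"
  assumes "degree p < N"
  shows "coeff (p \<circ>\<^sub>p r) c = (\<Sum>b<N. coeff p b * coeff (r ^ b) c)"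
proof -
  have "p \<circ>\<^sub>p r = (\<Sum>b\<le>degree p. Polynomial.smult (coeff p b) (r ^ b))"
    by (subst (1) poly_as_sum_of_monoms[symmetric]) (simp add: pcompose_sum pcompose_monom)
  hence "coeff (p \<circ>\<^sub>p r) c = (\<Sum>b\<le>degree p. coeff p b * coeff (r ^ b) c)"
    by (simp add: coeff_sum)
  also have "\<dots> = (\<Sum>b<N. coeff p b * coeff (r ^ b) c)"
    using assms by (intro sum.mono_neutral_left) (auto simp: coeff_eq_0)
  finally show ?thesis .
qed

interpretation of_real_poly_hom: map_poly_comm_semiring_hom "of_real :: real \<Rightarrow> complex" ..

lemma coprime_of_int_poly_if_no_common_root:
  fixes P1 P2 :: "int poly"
  assumes "P1 \<noteq> 0"
    and no_common_root: "\<not> (\<exists>z::complex. poly (of_int_poly P1) z = 0 \<and> poly (of_int_poly P2) z = 0)"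
  shows "coprime (of_int_poly P1 :: real poly) (of_int_poly P2)"
proof -
  define g where "g = gcd (of_int_poly P1 :: real poly) (of_int_poly P2)"
  have "g \<noteq> 0" using assms(1) unfolding g_def by simp
  have "degree g = 0"
  proof (rule ccontr)
    assume "degree g \<noteq> 0"
    then obtain z where z: "poly (map_poly complex_of_real g) z = 0"
      using fundamental_theorem_of_algebra[of "map_poly complex_of_real g"]
      by (auto simp: constant_degree)
    have root: "poly (of_int_poly P) z = 0" if "g dvd of_int_poly P" for P :: "int poly"
    proof -
      from that obtain k where "of_int_poly P = g * k" by (elim dvdE)
      hence "map_poly complex_of_real (of_int_poly P) = map_poly complex_of_real g * map_poly of_real k"
        by (simp add: of_real_poly_hom.hom_mult)
      thus ?thesis using z by (simp add: map_poly_map_poly o_def)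
    qed
    have "g dvd of_int_poly P1" "g dvd of_int_poly P2" unfolding g_def by auto
    with root no_common_root show False by blast
  qed
  thus ?thesis using is_unit_iff_degree[OF \<open>g \<noteq> 0\<close>] unfolding g_def is_unit_gcd by simp
qed

definition sylvester_block :: "nat \<Rightarrow> 'a \<Rightarrow> 'a \<Rightarrow> nat \<Rightarrow> 'a" where
  "sylvester_block m a b r = (if r < m then a else b)"

definition sylvester_shift :: "nat \<Rightarrow> nat \<Rightarrow> nat" where
  "sylvester_shift m r = (if r < m then r else r - m)"

text \<open>For \<open>x0 = 0\<close> and \<open>m = degree q\<close>, the coefficients of the rows \<open>r < degree p + degree q\<close>
  form the Sylvester matrix of \<open>p\<close> and \<open>q\<close> up to the order of rows and columns.\<close>
definition sylvester_row :: "'a :: comm_ring_1 \<Rightarrow> nat \<Rightarrow> 'a poly \<Rightarrow> 'a poly \<Rightarrow> nat \<Rightarrow> 'a poly" where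
  "sylvester_row x0 m p q r = [:-x0, 1:] ^ sylvester_shift m r * sylvester_block m p q r"

definition coeff_mat :: "nat \<Rightarrow> (nat \<Rightarrow> 'a :: zero poly) \<Rightarrow> 'a mat" where
  "coeff_mat N f = Matrix.mat N N (\<lambda>(r, b). coeff (f r) b)"

lemma sum_lessThan_add_split: "(\<Sum>r<(m::nat) + k. f r) = (\<Sum>r<m. f r) + (\<Sum>t<k. f (m + t))"
  by (induction k) (auto simp: add_ac)

lemma sylvester_row_0: "sylvester_row 0 m p q r = monom 1 (sylvester_shift m r) * sylvester_block m p q r"
  by (simp add: sylvester_row_def monom_altdef)

lemma degree_sylvester_row_less:
  assumes "r < n1 + n2" "degree p = n1" "degree q = n2"
  shows "degree (sylvester_row (x0 :: 'a :: idom) n2 p q r) < n1 + n2"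
proof -
  have "degree (sylvester_row x0 n2 p q r) \<le> sylvester_shift n2 r + degree (sylvester_block n2 p q r)"
    unfolding sylvester_row_def using degree_mult_le degree_power_le
    by (metis (no_types) add_le_mono1 degree_linear_power le_trans)
  also have "\<dots> < n1 + n2"
    using assms by (auto simp: sylvester_shift_def sylvester_block_def)
  finally show ?thesis .
qed

lemma det_coeff_mat_sylvester_row_nonzero:
  fixes p q :: "'a :: field_gcd poly"
  assumes "degree p = n1" "degree q = n2" "1 \<le> n1" "coprime p q"
  shows "det (coeff_mat (n1 + n2) (sylvester_row 0 n2 p q)) \<noteq> 0"
proof
  let ?N = "n1 + n2"
  let ?S = "coeff_mat ?N (sylvester_row 0 n2 p q)"
  assume "det ?S = 0"
  hence "det (transpose_mat ?S) = 0" by (subst det_transpose) (auto simp: coeff_mat_def)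
  then obtain v where v: "v \<in> carrier_vec ?N" "v \<noteq> 0\<^sub>v ?N" "transpose_mat ?S *\<^sub>v v = 0\<^sub>v ?N"
    using det_0_iff_vec_prod_zero_field[of "transpose_mat ?S" ?N] by (auto simp: coeff_mat_def)
  define A where "A = (\<Sum>r<n2. monom (v $ r) r)"
  define B where "B = (\<Sum>t<n1. monom (v $ (n2 + t)) t)"
  have cA: "coeff A t = (if t < n2 then v $ t else 0)" for t
    unfolding A_def by (simp add: coeff_sum coeff_monom)
  have cB: "coeff B t = (if t < n1 then v $ (n2 + t) else 0)" for t
    unfolding B_def by (simp add: coeff_sum coeff_monom)
  have combination: "coeff (A * p + B * q) b = (\<Sum>r<?N. v $ r * coeff (sylvester_row 0 n2 p q r) b)" for b
  proof -
    have "coeff (A * p + B * q) b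
        = (\<Sum>r<n2. v $ r * coeff (monom 1 r * p) b) + (\<Sum>t<n1. v $ (n2 + t) * coeff (monom 1 t * q) b)"
      unfolding A_def B_def
      by (simp add: sum_distrib_right coeff_sum coeff_monom_mult)
         (auto intro!: sum.cong arg_cong2[where f="(+)"])
    thus ?thesis
      by (simp add: add.commute[of n1 n2] sum_lessThan_add_split sylvester_row_0
          sylvester_shift_def sylvester_block_def)
  qed
  have "A * p + B * q = 0"
  proof (rule poly_eqI)
    fix b
    show "coeff (A * p + B * q) b = coeff 0 b"
    proof (cases "b < ?N")
      case True
      have "(transpose_mat ?S *\<^sub>v v) $ b = 0" using v(3) True by simp
      hence "(\<Sum>r<?N. v $ r * coeff (sylvester_row 0 n2 p q r) b) = 0"
        using True v(1) by (simp add: coeff_mat_def scalar_prod_def atLeast0LessThan mult.commute)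
      thus ?thesis by (simp only: combination coeff_0)
    next
      case False
      have "coeff (sylvester_row 0 n2 p q r) b = 0" if "r < ?N" for r
        using degree_sylvester_row_less[OF that assms(1,2), of 0] False
        by (intro coeff_eq_0) linarith
      thus ?thesis by (simp only: combination coeff_0) simp
    qed
  qed
  show False
  proof (cases "B = 0")
    case True
    with \<open>A * p + B * q = 0\<close> assms(1,3) have "A = 0" by auto
    have "v = 0\<^sub>v ?N"
    proof (rule eq_vecI)
      fix i assume i: "i < dim_vec (0\<^sub>v ?N)"
      show "v $ i = 0\<^sub>v ?N $ i"
      proof (cases "i < n2")
        case True thus ?thesis using i cA[of i] \<open>A = 0\<close> by simp
      next
        case False
        hence "i - n2 < n1" "n2 + (i - n2) = i" using i by auto
        thus ?thesis using i cB[of "i - n2"] \<open>B = 0\<close> by simp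
      qed
    qed (use v(1) in auto)
    with v(2) show False by simp
  next
    case False
    have "p dvd B * q" using \<open>A * p + B * q = 0\<close>
      by (metis add.commute add_eq_0_iff dvd_minus_iff dvd_triv_right mult.commute)
    hence "p dvd B" using assms(4) by (metis coprime_dvd_mult_left_iff)
    hence "degree p \<le> degree B" using False by (rule dvd_imp_degree_le)
    moreover have "degree B < n1" using assms(3) by (intro degree_lessI) (auto simp: cB)
    ultimately show False using assms(1) by simp
  qed
qed

lemma one_le_abs_det_sylvester_of_int:
  fixes P1 P2 :: "int poly"
  assumes "degree P1 = n1" "degree P2 = n2" "1 \<le> n1"
    and "\<not> (\<exists>z::complex. poly (of_int_poly P1) z = 0 \<and> poly (of_int_poly P2) z = 0)"
  shows "1 \<le> \<bar>det (coeff_mat (n1 + n2) (sylvester_row 0 n2 (of_int_poly P1 :: real poly) (of_int_poly P2)))\<bar>"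
proof -
  let ?S = "coeff_mat (n1 + n2) (sylvester_row 0 n2 (of_int_poly P1 :: real poly) (of_int_poly P2))"
  have "?S = map_mat of_int (coeff_mat (n1 + n2) (sylvester_row 0 n2 P1 P2))"
    by (rule eq_matI) (auto simp: coeff_mat_def sylvester_row_0 coeff_monom_mult sylvester_block_def)
  hence "det ?S = of_int (det (coeff_mat (n1 + n2) (sylvester_row 0 n2 P1 P2)))"
    by simp
  moreover have "P1 \<noteq> 0" using assms(1,3) by auto
  hence "det ?S \<noteq> 0"
    using assms coprime_of_int_poly_if_no_common_root by (intro det_coeff_mat_sylvester_row_nonzero) auto
  ultimately have "det (coeff_mat (n1 + n2) (sylvester_row 0 n2 P1 P2)) \<noteq> 0"
    by auto
  hence "1 \<le> \<bar>det (coeff_mat (n1 + n2) (sylvester_row 0 n2 P1 P2))\<bar>" by linarith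
  with \<open>det ?S = _\<close> show ?thesis by (metis of_int_1_le_iff of_int_abs)
qed

lemma abs_det_le_sum_permutes:
  fixes A :: "'a :: linordered_idom mat"
  assumes "A \<in> carrier_mat N N"
  shows "\<bar>det A\<bar> \<le> (\<Sum>\<sigma> | \<sigma> permutes {0..<N}. \<Prod>i<N. \<bar>A $$ (\<sigma> i, i)\<bar>)"
proof -
  have "det A = det (transpose_mat A)" using det_transpose[OF assms] by simp
  also have "\<dots> = (\<Sum>\<sigma> | \<sigma> permutes {0..<N}. signof \<sigma> * (\<Prod>i<N. A $$ (\<sigma> i, i)))"
    using assms by (subst det_def'[of _ N])
      (auto intro!: sum.cong prod.cong simp: permutes_in_image atLeast0LessThan)
  finally have "\<bar>det A\<bar> \<le> (\<Sum>\<sigma> | \<sigma> permutes {0..<N}. \<bar>signof \<sigma> * (\<Prod>i<N. A $$ (\<sigma> i, i))\<bar>)"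
    by (simp add: sum_abs)
  also have "\<dots> = (\<Sum>\<sigma> | \<sigma> permutes {0..<N}. \<Prod>i<N. \<bar>A $$ (\<sigma> i, i)\<bar>)"
    by (intro sum.cong refl) (auto simp: abs_mult abs_prod sign_def)
  finally show ?thesis .
qed

lemma det_lower_unitriangular:
  assumes "L \<in> carrier_mat N N" "\<And>i j. i < j \<Longrightarrow> j < N \<Longrightarrow> L $$ (i, j) = 0"
    "\<And>i. i < N \<Longrightarrow> L $$ (i, i) = 1"
  shows "det L = 1"
proof -
  have "det L = prod_list (diag_mat L)" by (rule det_lower_triangular[OF assms(2,1)])
  also have "diag_mat L = replicate N 1"
    using assms(1,3) unfolding diag_mat_def by (auto intro!: nth_equalityI)
  finally show ?thesis by simp
qed

lemma sum_lessThan_if_le: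
  assumes "m < (M::nat)"
  shows "(\<Sum>a<M. if a \<le> m then f a else 0) = (\<Sum>a\<le>m. f a)"
proof -
  have "(\<Sum>a<M. if a \<le> m then f a else 0) = sum f {a\<in>{..<M}. a \<le> m}"
    by (simp add: sum.inter_filter[symmetric])
  also have "{a\<in>{..<M}. a \<le> m} = {..m}" using assms by auto
  finally show ?thesis .
qed

lemma coeff_mult_eq_sum_monom:
  fixes u p :: "'a :: comm_semiring_1 poly"
  assumes "degree u \<le> m"
  shows "coeff (u * p) b = (\<Sum>a\<le>m. coeff u a * coeff (monom 1 a * p) b)"
proof -
  have "coeff (u * p) b = (\<Sum>a\<le>degree u. coeff u a * coeff (monom 1 a * p) b)"
    by (subst (1) poly_as_sum_of_monoms[symmetric])
       (auto simp: sum_distrib_right coeff_sum coeff_monom_mult intro!: sum.cong)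
  also have "\<dots> = (\<Sum>a\<le>m. coeff u a * coeff (monom 1 a * p) b)"
    using assms by (intro sum.mono_neutral_left) (auto simp: coeff_eq_0)
  finally show ?thesis .
qed

text \<open>Passing from the centre \<open>0\<close> to \<open>x0\<close> multiplies the coefficient matrix from the left by a
  block-diagonal lower unitriangular matrix, built from the coefficients of \<open>(x - x0)^i\<close>.\<close>
lemma det_coeff_mat_sylvester_row_shift:
  fixes p q :: "'a :: idom poly"
  shows "det (coeff_mat (n1 + n2) (sylvester_row x0 n2 p q))
       = det (coeff_mat (n1 + n2) (sylvester_row 0 n2 p q))"
proof -
  define N where "N = n1 + n2"
  define S where "S = coeff_mat N (sylvester_row 0 n2 p q)"
  define U :: "'a mat" where "U = Matrix.mat N N (\<lambda>(r, a).
    if (a < n2 \<longleftrightarrow> r < n2) \<and> sylvester_shift n2 a \<le> sylvester_shift n2 r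
    then coeff ([:-x0, 1:] ^ sylvester_shift n2 r) (sylvester_shift n2 a) else 0)"
  have SC: "S \<in> carrier_mat N N" and UC: "U \<in> carrier_mat N N"
    unfolding S_def U_def coeff_mat_def by auto
  have "det U = 1"
    by (rule det_lower_unitriangular[OF UC])
       (auto simp: U_def sylvester_shift_def coeff_linear_power)
  have row: "(U * S) $$ (r, b) = coeff (sylvester_row x0 n2 p q r) b" if r: "r < N" and b: "b < N" for r b
  proof -
    let ?i = "sylvester_shift n2 r" and ?P = "sylvester_block n2 p q r"
    have "(U * S) $$ (r, b) = (\<Sum>a<N. U $$ (r, a) * S $$ (a, b))"
      using r b UC SC by (simp add: scalar_prod_def atLeast0LessThan)
    also have "\<dots> = (\<Sum>a<n2. U $$ (r, a) * S $$ (a, b)) + (\<Sum>t<n1. U $$ (r, n2 + t) * S $$ (n2 + t, b))"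
      unfolding N_def add.commute[of n1 n2] sum_lessThan_add_split ..
    also have "\<dots> = (\<Sum>a\<le>?i. coeff ([:-x0, 1:] ^ ?i) a * coeff (monom 1 a * ?P) b)"
    proof (cases "r < n2")
      case True
      have "(\<Sum>a<n2. U $$ (r, a) * S $$ (a, b))
          = (\<Sum>a<n2. if a \<le> r then coeff ([:-x0, 1:] ^ r) a * coeff (monom 1 a * p) b else 0)"
        using True r b unfolding U_def S_def N_def coeff_mat_def
        by (intro sum.cong) (auto simp: sylvester_shift_def sylvester_row_0 sylvester_block_def)
      also have "\<dots> = (\<Sum>a\<le>r. coeff ([:-x0, 1:] ^ r) a * coeff (monom 1 a * p) b)"
        using True by (rule sum_lessThan_if_le)
      finally show ?thesis
        using True unfolding U_def N_def by (simp add: sylvester_shift_def sylvester_block_def)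
    next
      case False
      have "(\<Sum>t<n1. U $$ (r, n2 + t) * S $$ (n2 + t, b))
          = (\<Sum>t<n1. if t \<le> r - n2 then coeff ([:-x0, 1:] ^ (r - n2)) t * coeff (monom 1 t * q) b else 0)"
        using False r b unfolding U_def S_def N_def coeff_mat_def
        by (intro sum.cong) (auto simp: sylvester_shift_def sylvester_row_0 sylvester_block_def)
      also have "\<dots> = (\<Sum>t\<le>r - n2. coeff ([:-x0, 1:] ^ (r - n2)) t * coeff (monom 1 t * q) b)"
        using False r unfolding N_def by (intro sum_lessThan_if_le) simp
      finally show ?thesis
        using False r unfolding U_def N_def by (simp add: sylvester_shift_def sylvester_block_def)
    qed
    also have "\<dots> = coeff (sylvester_row x0 n2 p q r) b"
      unfolding sylvester_row_def by (rule coeff_mult_eq_sum_monom[symmetric]) (simp add: degree_linear_power)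
    finally show ?thesis .
  qed
  have "U * S = coeff_mat N (sylvester_row x0 n2 p q)"
  proof (rule eq_matI)
    fix r b assume "r < dim_row (coeff_mat N (sylvester_row x0 n2 p q))"
      "b < dim_col (coeff_mat N (sylvester_row x0 n2 p q))"
    thus "(U * S) $$ (r, b) = coeff_mat N (sylvester_row x0 n2 p q) $$ (r, b)"
      by (simp add: row coeff_mat_def del: index_mult_mat)
  qed (use UC SC in \<open>auto simp: coeff_mat_def\<close>)
  hence "det (coeff_mat N (sylvester_row x0 n2 p q)) = det U * det S"
    using det_mult[OF UC SC] by simp
  thus ?thesis using \<open>det U = 1\<close> unfolding S_def N_def by simp
qed

text \<open>The weights \<open>w\<close> form a lower unitriangular change of columns, so the determinant is
  unchanged before the Leibniz expansion is estimated.\<close>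
lemma one_le_sum_permutes_weighted_sylvester:
  fixes p q :: "'a :: linordered_idom poly" and w :: "nat \<Rightarrow> nat \<Rightarrow> 'a" and n1 n2 :: nat
  defines "N \<equiv> n1 + n2"
  assumes "1 \<le> \<bar>det (coeff_mat N (sylvester_row 0 n2 p q))\<bar>"
    and "\<And>b c. b < c \<Longrightarrow> c < N \<Longrightarrow> w c b = 0" and "\<And>c. c < N \<Longrightarrow> w c c = 1"
  shows "1 \<le> (\<Sum>\<sigma> | \<sigma> permutes {0..<N}. \<Prod>c<N.
           \<bar>\<Sum>b<N. coeff (sylvester_row x0 n2 p q (\<sigma> c)) b * w c b\<bar>)"
proof -
  define S where "S = coeff_mat N (sylvester_row x0 n2 p q)"
  define E where "E = Matrix.mat N N (\<lambda>(b, c). w c b)"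
  have SC: "S \<in> carrier_mat N N" and EC: "E \<in> carrier_mat N N"
    unfolding S_def E_def coeff_mat_def by auto
  have "det E = 1"
    by (rule det_lower_unitriangular[OF EC]) (auto simp: E_def assms(3,4))
  have entry: "(S * E) $$ (r, c) = (\<Sum>b<N. coeff (sylvester_row x0 n2 p q r) b * w c b)"
    if "r < N" "c < N" for r c
    using that SC EC by (simp add: S_def E_def coeff_mat_def scalar_prod_def atLeast0LessThan)
  have "1 \<le> \<bar>det (S * E)\<bar>"
    using assms(2) det_mult[OF SC EC] \<open>det E = 1\<close> det_coeff_mat_sylvester_row_shift[of n1 n2 x0 p q]
    unfolding S_def N_def by simp
  also have "\<dots> \<le> (\<Sum>\<sigma> | \<sigma> permutes {0..<N}. \<Prod>c<N. \<bar>(S * E) $$ (\<sigma> c, c)\<bar>)"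
    using SC EC by (intro abs_det_le_sum_permutes) auto
  also have "\<dots> = (\<Sum>\<sigma> | \<sigma> permutes {0..<N}. \<Prod>c<N.
           \<bar>\<Sum>b<N. coeff (sylvester_row x0 n2 p q (\<sigma> c)) b * w c b\<bar>)"
    by (intro sum.cong prod.cong refl) (auto simp: entry permutes_in_image)
  finally show ?thesis .
qed

lemma pcompose_power_left: "(p ^ i) \<circ>\<^sub>p r = (p \<circ>\<^sub>p r) ^ i"
  for p r :: "'a :: comm_semiring_1 poly"
  by (induction i) (auto simp: pcompose_mult pcompose_1)

lemma coeff_pcompose_linear_power_mult:
  fixes p :: "'a :: comm_ring_1 poly"
  shows "coeff (([:-x0, 1:] ^ i * p) \<circ>\<^sub>p [:x0, 1:]) c
       = (if c < i then 0 else coeff (p \<circ>\<^sub>p [:x0, 1:]) (c - i))"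
proof -
  have "([:-x0, 1:] ^ i * p) \<circ>\<^sub>p [:x0, 1:] = monom 1 i * (p \<circ>\<^sub>p [:x0, 1:])"
    by (simp add: pcompose_mult pcompose_power_left pcompose_pCons monom_altdef)
  thus ?thesis by (simp add: coeff_monom_mult)
qed

lemma taylor_weights_sum:
  fixes p :: "'a :: comm_semiring_1 poly"
  assumes "degree p < N"
  shows "(\<Sum>b<N. coeff p b * coeff ([:x0, 1:] ^ b) c) = coeff (p \<circ>\<^sub>p [:x0, 1:]) c"
  using coeff_pcompose_eq_sum[OF assms] by simp

lemma taylor_weights_unitriangular:
  fixes x0 :: "'a :: idom"
  shows "b < c \<Longrightarrow> coeff ([:x0, 1:] ^ b) c = 0" and "coeff ([:x0, 1:] ^ c) c = 1"
  by (auto intro!: coeff_eq_0 simp: degree_linear_power coeff_linear_power)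

text \<open>The Taylor coefficients of the row polynomials are, up to \<open>Q^\<lambda>\<close> and a factorial, the entries
  of \<open>M\<close>; note the shift by one between our indices and those of \<open>matM\<close>.\<close>
lemma abs_coeff_taylor_sylvester_row_le:
  fixes P1 P2 :: "int poly"
  assumes "r < n1 + n2" "Q > 0"
  shows "\<bar>coeff (sylvester_row x n2 (of_int_poly P1 :: real poly) (of_int_poly P2) r \<circ>\<^sub>p [:x, 1:]) c\<bar>
         \<le> Q powr sylvester_block n2 lam1 lam2 r * matM n1 n2 P1 P2 lam1 lam2 Q x (r + 1) (c + 1)"
proof (cases "c < sylvester_shift n2 r")
  case True thus ?thesis
    by (simp add: sylvester_row_def coeff_pcompose_linear_power_mult matM_def)
next
  case False
  define j where "j = c - sylvester_shift n2 r"
  define P where "P = sylvester_block n2 P1 P2 r"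
  define lam where "lam = sylvester_block n2 lam1 lam2 r"
  have block: "sylvester_block n2 (of_int_poly P1 :: real poly) (of_int_poly P2) r = of_int_poly P"
    unfolding P_def sylvester_block_def by simp
  have M: "matM n1 n2 P1 P2 lam1 lam2 Q x (r + 1) (c + 1) = \<bar>pbar P lam Q (int j) x\<bar>"
    using False unfolding matM_def P_def lam_def j_def sylvester_block_def sylvester_shift_def
    by (auto simp: of_nat_diff) (simp add: algebra_simps)
  have "\<bar>coeff ((of_int_poly P :: real poly) \<circ>\<^sub>p [:x, 1:]) j\<bar>
      \<le> \<bar>coeff ((of_int_poly P :: real poly) \<circ>\<^sub>p [:x, 1:]) j\<bar> * fact j"
    by (simp add: mult_le_cancel_left1)
  also have "\<dots> = \<bar>poly ((pderiv ^^ j) (of_int_poly P)) x\<bar>"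
    by (simp flip: coeff_pcompose_linear_mult_fact add: abs_mult)
  also have "\<dots> = Q powr lam * \<bar>pbar P lam Q (int j) x\<bar>"
    using assms(2)
    by (simp add: pbar_def of_int_hom.map_poly_higher_pderiv abs_mult powr_minus field_simps)
  finally show ?thesis
    using False M unfolding sylvester_row_def block lam_def j_def
    by (simp add: coeff_pcompose_linear_power_mult)
qed

lemma perm_rect_nonneg: "(\<And>r s. 0 \<le> M r s) \<Longrightarrow> 0 \<le> perm_rect N k M"
  unfolding perm_rect_def by (auto intro!: sum_nonneg prod_nonneg)

lemma prod_permutes_le_perm_rect:
  fixes M :: "nat \<Rightarrow> nat \<Rightarrow> real"
  assumes \<sigma>: "\<sigma> permutes {0..<N}" and "k \<le> N" and "\<And>r s. 0 \<le> M r s"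
  shows "(\<Prod>c<k. M (\<sigma> c + 1) (c + 1)) \<le> perm_rect N k M"
proof -
  define T where "T = {\<tau>. \<tau> \<in> {1..k} \<rightarrow>\<^sub>E {1..N} \<and> inj_on \<tau> {1..k}}"
  define \<tau> where "\<tau> = restrict (\<lambda>s. \<sigma> (s - 1) + 1) {1..k}"
  have image: "\<sigma> (s - 1) < N" if "s \<in> {1..k}" for s
    using permutes_in_image[OF \<sigma>, of "s - 1"] that assms(2) by auto
  have "\<tau> \<in> {1..k} \<rightarrow>\<^sub>E {1..N}"
    unfolding \<tau>_def using image by (auto simp: PiE_def Pi_def Suc_le_eq)
  moreover have "inj_on \<tau> {1..k}"
  proof (rule inj_onI)
    fix s t assume st: "s \<in> {1..k}" "t \<in> {1..k}" "\<tau> s = \<tau> t"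
    hence "\<sigma> (s - 1) = \<sigma> (t - 1)" unfolding \<tau>_def by simp
    hence "s - 1 = t - 1" using permutes_inj[OF \<sigma>] by (auto dest: injD)
    thus "s = t" using st by auto
  qed
  ultimately have "\<tau> \<in> T" unfolding T_def by simp
  have "finite T" unfolding T_def
    by (rule finite_subset[of _ "{1..k} \<rightarrow>\<^sub>E {1..N}"]) (auto intro: finite_PiE)
  have "(\<Prod>c<k. M (\<sigma> c + 1) (c + 1)) = (\<Prod>s\<in>Suc ` {..<k}. M (\<tau> s) s)"
    by (subst prod.reindex) (auto simp: \<tau>_def intro!: prod.cong)
  also have "Suc ` {..<k} = {1..k}" by (simp add: image_Suc_lessThan)
  also have "(\<Prod>s\<in>{1..k}. M (\<tau> s) s) \<le> (\<Sum>\<tau>'\<in>T. \<Prod>s=1..k. M (\<tau>' s) s)"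
    by (rule member_le_sum[OF \<open>\<tau> \<in> T\<close> _ \<open>finite T\<close>]) (auto intro: prod_nonneg assms(3))
  finally show ?thesis unfolding perm_rect_def T_def .
qed

lemma prod_permutes_powr_sylvester_block:
  assumes "\<sigma> permutes {0..<n1 + n2}" "Q > 0"
  shows "(\<Prod>c<n1 + n2. Q powr sylvester_block n2 lam1 lam2 (\<sigma> c))
       = Q powr (real n1 * lam2 + real n2 * lam1)"
proof -
  have "(\<Prod>c<n1 + n2. Q powr sylvester_block n2 lam1 lam2 (\<sigma> c))
      = (\<Prod>r\<in>{0..<n1 + n2}. Q powr sylvester_block n2 lam1 lam2 r)"
    using prod.permute[OF assms(1), of "\<lambda>r. Q powr sylvester_block n2 lam1 lam2 r"]
    by (simp add: atLeast0LessThan)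
  also have "\<dots> = Q powr (\<Sum>r<n2 + n1. sylvester_block n2 lam1 lam2 r)"
    using assms(2) by (simp add: powr_sum atLeast0LessThan add.commute)
  also have "(\<Sum>r<n2 + n1. sylvester_block n2 lam1 lam2 r) = real n1 * lam2 + real n2 * lam1"
    unfolding sum_lessThan_add_split by (simp add: sylvester_block_def)
  finally show ?thesis .
qed

lemma prod_permutes_le_power_mult_perm_rect:
  fixes M :: "nat \<Rightarrow> nat \<Rightarrow> real"
  assumes "\<sigma> permutes {0..<N}" "k \<le> N" "\<And>r s. 0 \<le> M r s" "\<And>r s. s \<le> N \<Longrightarrow> M r s \<le> K"
  shows "(\<Prod>c<N. M (\<sigma> c + 1) (c + 1)) \<le> K ^ (N - k) * perm_rect N k M"
proof -
  have split: "{..<N} = {..<k} \<union> {k..<N}" using assms(2) by auto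
  have "(\<Prod>c<N. M (\<sigma> c + 1) (c + 1))
      = (\<Prod>c<k. M (\<sigma> c + 1) (c + 1)) * (\<Prod>c\<in>{k..<N}. M (\<sigma> c + 1) (c + 1))"
    unfolding split by (rule prod.union_disjoint) auto
  also have "\<dots> \<le> perm_rect N k M * K ^ (N - k)"
  proof (rule mult_mono)
    have "(\<Prod>c\<in>{k..<N}. M (\<sigma> c + 1) (c + 1)) \<le> (\<Prod>c\<in>{k..<N}. K)"
      by (rule prod_mono) (use assms(3,4) in auto)
    thus "(\<Prod>c\<in>{k..<N}. M (\<sigma> c + 1) (c + 1)) \<le> K ^ (N - k)" by simp
  qed (use assms prod_permutes_le_perm_rect[OF assms(1-3)] perm_rect_nonneg[of M]
       in \<open>auto intro: prod_nonneg\<close>)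
  finally show ?thesis by (simp add: mult.commute)
qed

lemma prod_taylor_sylvester_row_le:
  fixes P1 P2 :: "int poly" and n1 n2 :: nat and lam1 lam2 Q \<xi> :: real
  defines "N \<equiv> n1 + n2" and "M \<equiv> matM n1 n2 P1 P2 lam1 lam2 Q \<xi>"
  assumes \<sigma>: "\<sigma> permutes {0..<N}" and "N \<le> n" "Q > 0" "k \<le> N" "1 \<le> n1"
    and "degree P1 = n1" "real_of_int (height P1) \<le> Q powr lam1"
    and "degree P2 = n2" "real_of_int (height P2) \<le> Q powr lam2" "\<bar>\<xi>\<bar> \<le> 1"
  shows "(\<Prod>c<N. \<bar>coeff (sylvester_row \<xi> n2 (of_int_poly P1 :: real poly) (of_int_poly P2) (\<sigma> c)
            \<circ>\<^sub>p [:\<xi>, 1:]) c\<bar>)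
       \<le> Q powr (real n1 * lam2 + real n2 * lam1) * (deriv_bound n ^ (N - k) * perm_rect N k M)"
proof -
  have image: "\<sigma> c < n1 + n2" if "c < N" for c
    using permutes_in_image[OF \<sigma>] that unfolding N_def by auto
  have "(\<Prod>c<N. \<bar>coeff (sylvester_row \<xi> n2 (of_int_poly P1 :: real poly) (of_int_poly P2) (\<sigma> c)
            \<circ>\<^sub>p [:\<xi>, 1:]) c\<bar>)
      \<le> (\<Prod>c<N. Q powr sylvester_block n2 lam1 lam2 (\<sigma> c) * M (\<sigma> c + 1) (c + 1))"
    unfolding M_def using image assms(5)
    by (intro prod_mono conjI abs_ge_zero abs_coeff_taylor_sylvester_row_le) auto
  also have "\<dots> = Q powr (real n1 * lam2 + real n2 * lam1) * (\<Prod>c<N. M (\<sigma> c + 1) (c + 1))"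
    using prod_permutes_powr_sylvester_block[OF \<sigma>[unfolded N_def] assms(5)]
    by (simp add: prod.distrib N_def)
  also have "\<dots> \<le> Q powr (real n1 * lam2 + real n2 * lam1) * (deriv_bound n ^ (N - k) * perm_rect N k M)"
  proof (intro mult_left_mono prod_permutes_le_power_mult_perm_rect[OF \<sigma>])
    show "0 \<le> M r s" for r s by (simp add: M_def matM_def)
    show "M r s \<le> deriv_bound n" if "s \<le> N" for r s
      unfolding M_def by (rule matM_le_deriv_bound) (use that assms(4-) in \<open>auto simp: N_def\<close>)
  qed (use assms(6) in auto)
  finally show ?thesis .
qed

lemma one_le_perm_rect_matM:
  fixes P1 P2 :: "int poly" and n1 n2 :: nat and lam1 lam2 Q \<xi> :: real
  defines "N \<equiv> n1 + n2" and "M \<equiv> matM n1 n2 P1 P2 lam1 lam2 Q \<xi>"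
  assumes "1 \<le> n1" "N \<le> n" "1 \<le> Q" "k \<le> N"
    and "degree P1 = n1" "real_of_int (height P1) \<le> Q powr lam1"
    and "degree P2 = n2" "real_of_int (height P2) \<le> Q powr lam2"
    and "\<not> (\<exists>z::complex. poly (of_int_poly P1) z = 0 \<and> poly (of_int_poly P2) z = 0)"
    and "\<bar>\<xi>\<bar> \<le> 1"
  shows "1 \<le> fact n * deriv_bound n ^ n * perm_rect N k M * Q powr (real n1 * lam2 + real n2 * lam1)"
proof -
  define B where "B = Q powr (real n1 * lam2 + real n2 * lam1) * (deriv_bound n ^ (N - k) * perm_rect N k M)"
  have "1 \<le> deriv_bound n" using assms(3,4) unfolding N_def by (intro one_le_deriv_bound) simp
  have "0 \<le> perm_rect N k M" unfolding M_def by (rule perm_rect_nonneg) (simp add: matM_def)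
  have "1 \<le> (\<Sum>\<sigma> | \<sigma> permutes {0..<N}. \<Prod>c<N.
     \<bar>\<Sum>b<N. coeff (sylvester_row \<xi> n2 (of_int_poly P1 :: real poly) (of_int_poly P2) (\<sigma> c)) b
             * coeff ([:\<xi>, 1:] ^ b) c\<bar>)"
    unfolding N_def
    by (rule one_le_sum_permutes_weighted_sylvester)
       (use one_le_abs_det_sylvester_of_int assms in \<open>auto simp: taylor_weights_unitriangular\<close>)
  also have "\<dots> \<le> (\<Sum>\<sigma> | \<sigma> permutes {0..<N}. B)"
  proof (rule sum_mono)
    fix \<sigma> assume \<sigma>: "\<sigma> \<in> {\<sigma>. \<sigma> permutes {0..<N}}"
    have "\<sigma> c < N" if "c < N" for c using \<sigma> permutes_in_image that by fastforce
    hence "(\<Prod>c<N. \<bar>\<Sum>b<N. coeff (sylvester_row \<xi> n2 (of_int_poly P1 :: real poly) (of_int_poly P2) (\<sigma> c)) b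
             * coeff ([:\<xi>, 1:] ^ b) c\<bar>)
        = (\<Prod>c<N. \<bar>coeff (sylvester_row \<xi> n2 (of_int_poly P1 :: real poly) (of_int_poly P2) (\<sigma> c)
            \<circ>\<^sub>p [:\<xi>, 1:]) c\<bar>)"
      using assms(7,9) unfolding N_def
      by (intro prod.cong refl arg_cong[where f=abs] taylor_weights_sum degree_sylvester_row_less) auto
    also have "\<dots> \<le> B"
      unfolding B_def M_def N_def using \<sigma> assms(3-) unfolding N_def
      by (intro prod_taylor_sylvester_row_le) auto
    finally show "(\<Prod>c<N. \<bar>\<Sum>b<N. coeff (sylvester_row \<xi> n2 (of_int_poly P1 :: real poly) (of_int_poly P2) (\<sigma> c)) b
             * coeff ([:\<xi>, 1:] ^ b) c\<bar>) \<le> B" .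
  qed
  also have "\<dots> = fact N * B" by (simp add: card_permutations)
  also have "\<dots> \<le> fact n * (Q powr (real n1 * lam2 + real n2 * lam1) * (deriv_bound n ^ n * perm_rect N k M))"
    unfolding B_def using assms(4) \<open>1 \<le> deriv_bound n\<close> \<open>0 \<le> perm_rect N k M\<close>
    by (intro mult_mono fact_mono mult_left_mono mult_right_mono power_increasing) auto
  finally show ?thesis by (simp add: mult_ac)
qed

text \<open>Column weights for part (b): columns \<open>0, 1, 2\<close> are read through the value and the first two
  normalised finite differences with step \<open>h\<close> at \<open>y0\<close>, which only involve values of the polynomial
  at \<open>y0, y0 + h, y0 + 2h\<close>; the remaining columns keep the Taylor weights at \<open>y0\<close>.\<close>
definition difference_weight :: "'a :: field \<Rightarrow> 'a \<Rightarrow> nat \<Rightarrow> nat \<Rightarrow> 'a" where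
  "difference_weight y0 h c b =
     (if c = 0 then y0 ^ b
      else if c = 1 then ((y0 + h) ^ b - y0 ^ b) / h
      else if c = 2 then ((y0 + 2 * h) ^ b - 2 * (y0 + h) ^ b + y0 ^ b) / (2 * h ^ 2)
      else coeff ([:y0, 1:] ^ b) c)"

lemma difference_weight_unitriangular:
  fixes y0 h :: "'a :: field_char_0"
  assumes "h \<noteq> 0"
  shows "b < c \<Longrightarrow> difference_weight y0 h c b = 0" and "difference_weight y0 h c c = 1"
proof -
  show "difference_weight y0 h c b = 0" if "b < c"
  proof (cases "c \<ge> 3")
    case True
    thus ?thesis using taylor_weights_unitriangular(1)[OF that] by (simp add: difference_weight_def)
  next
    case False
    hence "c = 1 \<and> b = 0 \<or> c = 2 \<and> (b = 0 \<or> b = 1)" using that by linarith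
    thus ?thesis using assms by (auto simp: difference_weight_def)
  qed
  have "(y0 + 2 * h)\<^sup>2 - 2 * (y0 + h)\<^sup>2 + y0\<^sup>2 = 2 * h ^ 2"
    by (simp add: power2_eq_square algebra_simps)
  moreover consider "c = 0" | "c = 1" | "c = 2" | "c \<ge> 3" by linarith
  ultimately show "difference_weight y0 h c c = 1"
    using assms by cases (auto simp: difference_weight_def taylor_weights_unitriangular(2))
qed

lemma sum_difference_weight:
  fixes p :: "'a :: field_char_0 poly"
  assumes "degree p < N"
  shows "(\<Sum>b<N. coeff p b * difference_weight y0 h c b) =
    (if c = 0 then poly p y0
     else if c = 1 then (poly p (y0 + h) - poly p y0) / h
     else if c = 2 then (poly p (y0 + 2 * h) - 2 * poly p (y0 + h) + poly p y0) / (2 * h ^ 2)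
     else coeff (p \<circ>\<^sub>p [:y0, 1:]) c)"
proof -
  have poly_eq: "(\<Sum>b<N. coeff p b * y ^ b) = poly p y" for y
    unfolding poly_altdef using assms by (intro sum.mono_neutral_right) (auto simp: coeff_eq_0)
  consider "c = 0" | "c = 1" | "c = 2" | "c \<ge> 3" by linarith
  thus ?thesis
  proof cases
    case 2
    have "(\<Sum>b<N. coeff p b * difference_weight y0 h c b)
        = (\<Sum>b<N. (coeff p b * (y0 + h) ^ b - coeff p b * y0 ^ b) / h)"
      using 2 by (intro sum.cong) (auto simp: difference_weight_def algebra_simps diff_divide_distrib)
    also have "\<dots> = ((\<Sum>b<N. coeff p b * (y0 + h) ^ b) - (\<Sum>b<N. coeff p b * y0 ^ b)) / h"
      by (simp add: sum_divide_distrib[symmetric] sum_subtractf)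
    finally show ?thesis using 2 by (simp add: poly_eq)
  next
    case 3
    have "(\<Sum>b<N. coeff p b * difference_weight y0 h c b)
        = (\<Sum>b<N. (coeff p b * (y0 + 2 * h) ^ b - 2 * (coeff p b * (y0 + h) ^ b)
                    + coeff p b * y0 ^ b) / (2 * h ^ 2))"
      using 3 by (intro sum.cong)
        (auto simp: difference_weight_def algebra_simps add_divide_distrib diff_divide_distrib)
    also have "\<dots> = ((\<Sum>b<N. coeff p b * (y0 + 2 * h) ^ b) - 2 * (\<Sum>b<N. coeff p b * (y0 + h) ^ b)
                    + (\<Sum>b<N. coeff p b * y0 ^ b)) / (2 * h ^ 2)"
      by (simp add: sum_divide_distrib[symmetric] sum_subtractf sum.distrib sum_distrib_left)
    finally show ?thesis using 3 by (simp add: poly_eq)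
  qed (use assms taylor_weights_sum in \<open>auto simp: difference_weight_def poly_eq\<close>)
qed

lemma abs_sum_difference_weight_le:
  fixes p :: "real poly"
  assumes "degree p < N" "h > 0" "c < 3" "\<And>t. t \<le> 2 \<Longrightarrow> \<bar>poly p (y0 + real t * h)\<bar> \<le> V"
  shows "\<bar>\<Sum>b<N. coeff p b * difference_weight y0 h c b\<bar> \<le> 2 * V / h ^ c"
proof -
  have v0: "\<bar>poly p y0\<bar> \<le> V" and v1: "\<bar>poly p (y0 + h)\<bar> \<le> V" and v2: "\<bar>poly p (y0 + 2 * h)\<bar> \<le> V"
    using assms(4)[of 0] assms(4)[of 1] assms(4)[of 2] by simp_all
  consider "c = 0" | "c = 1" | "c = 2" using assms(3) by linarith
  thus ?thesis
  proof cases
    case 1 thus ?thesis using v0 by (simp add: sum_difference_weight[OF assms(1)])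
  next
    case 2
    have "\<bar>poly p (y0 + h) - poly p y0\<bar> / h \<le> 2 * V / h"
      using v0 v1 assms(2) by (intro divide_right_mono) auto
    thus ?thesis using 2 assms(2) by (simp add: sum_difference_weight[OF assms(1)])
  next
    case 3
    have "\<bar>poly p (y0 + 2 * h) - 2 * poly p (y0 + h) + poly p y0\<bar> / (2 * h ^ 2) \<le> 4 * V / (2 * h ^ 2)"
      using v0 v1 v2 assms(2) by (intro divide_right_mono) auto
    thus ?thesis using 3 assms(2) by (simp add: sum_difference_weight[OF assms(1)])
  qed
qed

lemma abs_poly_sylvester_row_le:
  fixes p q :: "real poly"
  assumes "h > 0" "t \<le> 2" "sylvester_shift m r \<le> n"
  shows "\<bar>poly (sylvester_row y0 m p q r) (y0 + real t * h)\<bar>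
       \<le> 2 ^ n * h ^ sylvester_shift m r * \<bar>poly (sylvester_block m p q r) (y0 + real t * h)\<bar>"
proof -
  let ?i = "sylvester_shift m r"
  have "(real t * h) ^ ?i \<le> (2 * h) ^ ?i" using assms by (intro power_mono mult_right_mono) auto
  also have "\<dots> \<le> 2 ^ n * h ^ ?i"
    using assms by (simp add: power_mult_distrib mult_right_mono power_increasing)
  finally show ?thesis
    using assms(1) by (simp add: sylvester_row_def abs_mult power_abs mult_right_mono)
qed

lemma sylvester_shift_sum_ge_one:
  assumes "inj_on \<sigma> {0, 1, 2 :: nat}"
  shows "1 \<le> sylvester_shift m (\<sigma> 0) + sylvester_shift m (\<sigma> 1) + sylvester_shift m (\<sigma> 2)"
proof (rule ccontr)
  assume "\<not> ?thesis"
  hence "\<sigma> 0 \<in> {0, m}" "\<sigma> 1 \<in> {0, m}" "\<sigma> 2 \<in> {0, m}"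
    by (auto simp: sylvester_shift_def split: if_splits)
  moreover have "\<sigma> 0 \<noteq> \<sigma> 1" "\<sigma> 0 \<noteq> \<sigma> 2" "\<sigma> 1 \<noteq> \<sigma> 2"
    using assms by (auto dest: inj_onD)
  ultimately show False by auto
qed

lemma abs_difference_column_sylvester_row_le:
  fixes p q :: "real poly"
  assumes "r < n1 + n2" "degree p = n1" "degree q = n2" "n1 + n2 \<le> n" "h > 0" "c < 3"
    and "\<And>t. t \<le> 2 \<Longrightarrow> \<bar>poly (sylvester_block n2 p q r) (y0 + real t * h)\<bar> \<le> T"
  shows "\<bar>\<Sum>b<n1 + n2. coeff (sylvester_row y0 n2 p q r) b * difference_weight y0 h c b\<bar>
       \<le> 2 ^ (n + 1) * h ^ sylvester_shift n2 r * T / h ^ c"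
proof -
  have "sylvester_shift n2 r \<le> n" using assms(1,4) by (auto simp: sylvester_shift_def)
  have "\<bar>poly (sylvester_row y0 n2 p q r) (y0 + real t * h)\<bar> \<le> 2 ^ n * h ^ sylvester_shift n2 r * T"
    if "t \<le> 2" for t
    using abs_poly_sylvester_row_le[OF assms(5) that \<open>sylvester_shift n2 r \<le> n\<close>] assms(5) assms(7)[OF that]
    by (smt (verit) mult_left_mono zero_le_power zero_le_numeral mult_nonneg_nonneg less_imp_le)
  from abs_sum_difference_weight_le[OF degree_sylvester_row_less[OF assms(1-3)] assms(5,6) this]
  show ?thesis by simp
qed

lemma abs_taylor_column_sylvester_row_le:
  fixes P1 P2 :: "int poly"
  assumes "r < n1 + n2" "n1 + n2 \<le> n" "1 \<le> n1" "Q > 0" "3 \<le> c" "c < n1 + n2"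
    and "degree P1 = n1" "real_of_int (height P1) \<le> Q powr lam1"
    and "degree P2 = n2" "real_of_int (height P2) \<le> Q powr lam2" "\<bar>y0\<bar> \<le> 1"
  shows "\<bar>\<Sum>b<n1 + n2. coeff (sylvester_row y0 n2 (of_int_poly P1 :: real poly) (of_int_poly P2) r) b
           * difference_weight y0 h c b\<bar>
       \<le> Q powr sylvester_block n2 lam1 lam2 r * deriv_bound n"
proof -
  have "\<bar>\<Sum>b<n1 + n2. coeff (sylvester_row y0 n2 (of_int_poly P1 :: real poly) (of_int_poly P2) r) b
           * difference_weight y0 h c b\<bar>
      = \<bar>coeff (sylvester_row y0 n2 (of_int_poly P1 :: real poly) (of_int_poly P2) r \<circ>\<^sub>p [:y0, 1:]) c\<bar>"
    using assms(5) assms(7,9)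
      degree_sylvester_row_less[OF assms(1), of "of_int_poly P1 :: real poly" "of_int_poly P2" y0]
    by (subst sum_difference_weight) auto
  also have "\<dots> \<le> Q powr sylvester_block n2 lam1 lam2 r * matM n1 n2 P1 P2 lam1 lam2 Q y0 (r + 1) (c + 1)"
    by (rule abs_coeff_taylor_sylvester_row_le[OF assms(1,4)])
  also have "\<dots> \<le> Q powr sylvester_block n2 lam1 lam2 r * deriv_bound n"
    using assms by (intro mult_left_mono matM_le_deriv_bound) auto
  finally show ?thesis .
qed

text \<open>The first three columns each lose a factor \<open>h\<close> per difference, \<open>h^{-3}\<close> in total, but at
  least one of the three rows they meet carries a factor \<open>x - y0\<close>, worth \<open>h\<close> on the nodes.\<close>
lemma prod_difference_sylvester_row_le:
  fixes P1 P2 :: "int poly" and n1 n2 :: nat and tau1 tau2 lam1 lam2 :: real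
  defines "N \<equiv> n1 + n2" and "m \<equiv> min (tau1 + lam1) (tau2 + lam2)"
  assumes \<sigma>: "\<sigma> permutes {0..<N}" and "3 \<le> N" "N \<le> n" "1 \<le> n1" "1 \<le> Q" "0 < h" "h \<le> 1"
    and "degree P1 = n1" "real_of_int (height P1) \<le> Q powr lam1"
    and "degree P2 = n2" "real_of_int (height P2) \<le> Q powr lam2" "\<bar>y0\<bar> \<le> 1"
    and nodes: "\<And>t. t \<le> 2 \<Longrightarrow> \<bar>poly (of_int_poly P1) (y0 + real t * h)\<bar> \<le> Q powr - tau1
                              \<and> \<bar>poly (of_int_poly P2) (y0 + real t * h)\<bar> \<le> Q powr - tau2"
  shows "(\<Prod>c<N. \<bar>\<Sum>b<N. coeff (sylvester_row y0 n2 (of_int_poly P1 :: real poly) (of_int_poly P2) (\<sigma> c)) b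
            * difference_weight y0 h c b\<bar>)
       \<le> (2 ^ (n + 1)) ^ 3 / h ^ 2 * (Q powr - m) ^ 3 * deriv_bound n ^ n
          * Q powr (real n1 * lam2 + real n2 * lam1)"
proof -
  define A :: real where "A = 2 ^ (n + 1)"
  define K where "K = deriv_bound n"
  define i where "i c = sylvester_shift n2 (\<sigma> c)" for c
  define \<gamma> where "\<gamma> c = (if c < 3 then A * h ^ i c * Q powr - m / h ^ c else K)" for c
  have "1 \<le> K" unfolding K_def using assms(5,6) by (intro one_le_deriv_bound) (simp add: N_def)
  have image: "\<sigma> c < n1 + n2" if "c < N" for c
    using permutes_in_image[OF \<sigma>] that unfolding N_def by auto
  have entry: "\<bar>\<Sum>b<N. coeff (sylvester_row y0 n2 (of_int_poly P1 :: real poly) (of_int_poly P2) (\<sigma> c)) b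
            * difference_weight y0 h c b\<bar> \<le> \<gamma> c * Q powr sylvester_block n2 lam1 lam2 (\<sigma> c)"
    if "c < N" for c
  proof (cases "c < 3")
    case True
    let ?tau = "sylvester_block n2 tau1 tau2 (\<sigma> c)" and ?lam = "sylvester_block n2 lam1 lam2 (\<sigma> c)"
    have "Q powr - ?tau = Q powr - (?tau + ?lam) * Q powr ?lam" by (simp add: powr_add[symmetric])
    also have "\<dots> \<le> Q powr - m * Q powr ?lam"
      using assms(7) by (intro mult_right_mono powr_mono) (auto simp: m_def sylvester_block_def)
    finally have "A * h ^ i c * Q powr - ?tau / h ^ c \<le> A * h ^ i c * (Q powr - m * Q powr ?lam) / h ^ c"
      using assms(8) by (intro divide_right_mono mult_left_mono) (auto simp: A_def)
    also have "\<dots> = \<gamma> c * Q powr ?lam" using True by (simp add: \<gamma>_def)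
    finally have "A * h ^ i c * Q powr - ?tau / h ^ c \<le> \<gamma> c * Q powr ?lam" .
    moreover have "\<bar>poly (sylvester_block n2 (of_int_poly P1) (of_int_poly P2) (\<sigma> c)) (y0 + real t * h)\<bar>
        \<le> Q powr - ?tau" if "t \<le> 2" for t
      using nodes[OF that] by (simp add: sylvester_block_def)
    moreover have "degree (of_int_poly P1 :: real poly) = n1" "degree (of_int_poly P2 :: real poly) = n2"
      using assms(10,12) by simp_all
    ultimately show ?thesis
      using abs_difference_column_sylvester_row_le[OF image[OF \<open>c < N\<close>] _ _ _ assms(8) True,
          of "of_int_poly P1" "of_int_poly P2" n y0 "Q powr - ?tau"] assms(5)
      unfolding N_def A_def i_def by fastforce
  next
    case False
    thus ?thesis
      using abs_taylor_column_sylvester_row_le[OF image[OF \<open>c < N\<close>]] assms(5-7,10-) that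
      by (simp add: \<gamma>_def K_def N_def mult.commute)
  qed
  have "(\<Prod>c<N. \<bar>\<Sum>b<N. coeff (sylvester_row y0 n2 (of_int_poly P1 :: real poly) (of_int_poly P2) (\<sigma> c)) b
            * difference_weight y0 h c b\<bar>)
      \<le> (\<Prod>c<N. \<gamma> c * Q powr sylvester_block n2 lam1 lam2 (\<sigma> c))"
    by (intro prod_mono conjI abs_ge_zero entry) auto
  also have "\<dots> = (\<Prod>c<N. \<gamma> c) * Q powr (real n1 * lam2 + real n2 * lam1)"
    using prod_permutes_powr_sylvester_block[OF \<sigma>[unfolded N_def]] assms(7)
    by (simp add: prod.distrib N_def)
  also have "(\<Prod>c<N. \<gamma> c) \<le> A ^ 3 / h ^ 2 * (Q powr - m) ^ 3 * K ^ n"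
  proof -
    have "{..<N} = {0, 1, 2} \<union> {3..<N}" using assms(4) by auto
    hence split: "(\<Prod>c<N. \<gamma> c) = \<gamma> 0 * \<gamma> 1 * \<gamma> 2 * K ^ (N - 3)"
      by (simp add: prod.union_disjoint \<gamma>_def mult_ac)
    have "h ^ (i 0 + i 1 + i 2) \<le> h ^ 1"
      using sylvester_shift_sum_ge_one[OF permutes_inj_on[OF \<sigma>], of n2] assms(8,9)
      by (intro power_decreasing) (auto simp: i_def)
    hence "A ^ 3 * h ^ (i 0 + i 1 + i 2) / h ^ 3 * (Q powr - m) ^ 3 \<le> A ^ 3 * h / h ^ 3 * (Q powr - m) ^ 3"
      using assms(8) by (intro mult_right_mono divide_right_mono mult_left_mono) (auto simp: A_def)
    also have "\<dots> = A ^ 3 / h ^ 2 * (Q powr - m) ^ 3"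
      using assms(8) by (simp add: power3_eq_cube power2_eq_square)
    also have "A ^ 3 * h ^ (i 0 + i 1 + i 2) / h ^ 3 * (Q powr - m) ^ 3 = \<gamma> 0 * \<gamma> 1 * \<gamma> 2"
      by (simp add: \<gamma>_def power_add field_simps power3_eq_cube power2_eq_square)
    finally have "\<gamma> 0 * \<gamma> 1 * \<gamma> 2 \<le> A ^ 3 / h ^ 2 * (Q powr - m) ^ 3" .
    moreover have "K ^ (N - 3) \<le> K ^ n" using \<open>1 \<le> K\<close> assms(5) by (intro power_increasing) auto
    ultimately show ?thesis
      unfolding split by (rule mult_mono) (use \<open>1 \<le> K\<close> assms(8) in \<open>auto simp: A_def\<close>)
  qed
  finally show ?thesis
    unfolding A_def K_def by (simp add: mult_right_mono)
qed

lemma one_le_mult_powr_of_small_on_interval: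
  fixes P1 P2 :: "int poly" and n1 n2 :: nat and tau1 tau2 lam1 lam2 :: real
  defines "N \<equiv> n1 + n2"
  assumes "1 \<le> n1" "N \<le> n" "3 \<le> N" "1 \<le> Q"
    and "degree P1 = n1" "real_of_int (height P1) \<le> Q powr lam1"
    and "degree P2 = n2" "real_of_int (height P2) \<le> Q powr lam2"
    and "\<not> (\<exists>z::complex. poly (of_int_poly P1) z = 0 \<and> poly (of_int_poly P2) z = 0)"
    and "0 \<le> eta" "a < b" "b - a = Q powr - eta" "{a<..<b} \<subseteq> I" "I \<subseteq> {-1..1}"
    and small: "\<forall>x\<in>I. \<bar>poly (of_int_poly P1) x\<bar> \<le> Q powr - tau1 \<and> \<bar>poly (of_int_poly P2) x\<bar> \<le> Q powr - tau2"
  shows "1 \<le> fact n * (2 ^ (n + 1)) ^ 3 * deriv_bound n ^ n * 16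
           * Q powr (real n1 * lam2 + real n2 * lam1 - (3 * min (tau1 + lam1) (tau2 + lam2) - 2 * eta))"
proof -
  define h where "h = (b - a) / 4"
  define y0 where "y0 = a + h"
  define m where "m = min (tau1 + lam1) (tau2 + lam2)"
  define W where "W = (2 ^ (n + 1)) ^ 3 / h ^ 2 * (Q powr - m) ^ 3 * deriv_bound n ^ n
                      * Q powr (real n1 * lam2 + real n2 * lam1)"
  have "0 < h" unfolding h_def using assms(12) by simp
  have "b - a \<le> 1" using assms(5,11,13) powr_mono[of "- eta" 0 Q] by simp
  hence "h \<le> 1" unfolding h_def by simp
  have node: "y0 + real t * h \<in> I" if "t \<le> 2" for t
  proof -
    have "0 \<le> real t * h" "real t * h \<le> 2 * h" using that \<open>0 < h\<close> by (auto intro: mult_right_mono)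
    moreover have "b = a + 4 * h" unfolding h_def by simp
    ultimately have "a < y0 + real t * h" "y0 + real t * h < b"
      using \<open>0 < h\<close> unfolding y0_def by linarith+
    hence "y0 + real t * h \<in> {a<..<b}" by simp
    thus ?thesis using assms(14) by blast
  qed
  have "\<bar>y0\<bar> \<le> 1" using node[of 0] assms(15) by (auto simp: abs_le_iff)
  have "1 \<le> (\<Sum>\<sigma> | \<sigma> permutes {0..<N}. \<Prod>c<N.
     \<bar>\<Sum>b<N. coeff (sylvester_row y0 n2 (of_int_poly P1 :: real poly) (of_int_poly P2) (\<sigma> c)) b
             * difference_weight y0 h c b\<bar>)"
    unfolding N_def using \<open>0 < h\<close>
    by (intro one_le_sum_permutes_weighted_sylvester)
       (use one_le_abs_det_sylvester_of_int assms in \<open>auto simp: difference_weight_unitriangular\<close>)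
  also have "\<dots> \<le> (\<Sum>\<sigma> | \<sigma> permutes {0..<N}. W)"
    unfolding W_def m_def N_def using assms(1-9) \<open>0 < h\<close> \<open>h \<le> 1\<close> \<open>\<bar>y0\<bar> \<le> 1\<close> small node
    by (intro sum_mono prod_difference_sylvester_row_le) (auto simp: N_def)
  also have "\<dots> = fact N * W" by (simp add: card_permutations)
  also have "\<dots> \<le> fact n * W"
    using assms(3) \<open>0 < h\<close> deriv_bound_pos[of n] unfolding W_def
    by (intro mult_right_mono fact_mono) auto
  also have "fact n * W = fact n * (2 ^ (n + 1)) ^ 3 * deriv_bound n ^ n * 16
      * Q powr (real n1 * lam2 + real n2 * lam1 - (3 * m - 2 * eta))"
  proof -
    have "1 / h ^ 2 = 16 * Q powr (2 * eta)"
      using assms(5) unfolding h_def assms(13)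
      by (simp add: power_divide powr_power[symmetric] powr_minus divide_simps)
         (simp add: powr_power mult.commute)
    moreover have "(Q powr - m) ^ 3 = Q powr (- 3 * m)" using assms(5) by (simp add: powr_power)
    moreover have "W = (2 ^ (n + 1)) ^ 3 * deriv_bound n ^ n * (1 / h ^ 2) * (Q powr - m) ^ 3
        * Q powr (real n1 * lam2 + real n2 * lam1)"
      unfolding W_def by simp
    ultimately have "W = (2 ^ (n + 1)) ^ 3 * deriv_bound n ^ n * 16
        * (Q powr (2 * eta) * Q powr (- 3 * m) * Q powr (real n1 * lam2 + real n2 * lam1))"
      by (simp only: mult_ac)
    also have "Q powr (2 * eta) * Q powr (- 3 * m) * Q powr (real n1 * lam2 + real n2 * lam1)
        = Q powr (real n1 * lam2 + real n2 * lam1 - (3 * m - 2 * eta))"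
      by (simp add: powr_add[symmetric] algebra_simps)
    finally show ?thesis by (simp add: mult_ac)
  qed
  finally show ?thesis unfolding m_def .
qed

lemma lt_add_of_one_le_mult_powr:
  fixes C Q \<delta> x y :: real
  assumes "0 < C" "0 < \<delta>" "max 1 (C powr (1 / \<delta>)) < Q" "1 \<le> C * Q powr (y - x)"
  shows "x < y + \<delta>"
proof (rule ccontr)
  assume "\<not> x < y + \<delta>"
  hence "Q powr (y - x) \<le> Q powr - \<delta>" using assms(3) by (intro powr_mono) auto
  hence "1 \<le> C * Q powr - \<delta>" using assms(1,4) by (smt (verit) mult_left_mono)
  hence "Q powr \<delta> \<le> C" using assms(3) by (simp add: powr_minus field_simps)
  moreover have "C = (C powr (1 / \<delta>)) powr \<delta>" using assms(1,2) by (simp add: powr_powr)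
  moreover have "(C powr (1 / \<delta>)) powr \<delta> < Q powr \<delta>"
    using assms(2,3) by (intro powr_less_mono2) auto
  ultimately show False by simp
qed

theorem lemma8:
  fixes n :: nat
  shows
  "(\<exists>c>0. \<forall>(n1::nat) (n2::nat) (lam1::real) (lam2::real) (Q::real) (P1::int poly) (P2::int poly)
        (\<xi>::real) (k::nat).
      n1 \<ge> 1 \<and> n2 \<ge> 1 \<and> n1 + n2 \<le> n \<and> lam1 \<ge> 0 \<and> lam2 \<ge> 0 \<and> Q \<ge> 1 \<and>
      degree P1 = n1 \<and> real_of_int (height P1) \<le> Q powr lam1 \<and>
      degree P2 = n2 \<and> real_of_int (height P2) \<le> Q powr lam2 \<and>
      \<not> (\<exists>z::complex. poly (map_poly of_int P1) z = 0 \<and> poly (map_poly of_int P2) z = 0) \<and>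
      -1/2 < \<xi> \<and> \<xi> < 1/2 \<and> 1 \<le> k \<and> k \<le> n1 + n2
      \<longrightarrow> 1 \<le> c * perm_rect (n1 + n2) k (matM n1 n2 P1 P2 lam1 lam2 Q \<xi>)
                 * Q powr (real n1 * lam2 + real n2 * lam1))
   \<and>
   (\<forall>\<delta>::real. \<delta> > 0 \<longrightarrow> (\<exists>Q0::real. \<forall>(n1::nat) (n2::nat) (lam1::real) (lam2::real) (Q::real)
        (P1::int poly) (P2::int poly) (tau1::real) (tau2::real) (eta::real) (I::real set) (a::real) (b::real).
      n1 \<ge> 1 \<and> n2 \<ge> 1 \<and> n1 + n2 \<le> n \<and> n1 + n2 \<ge> 3 \<and> lam1 \<ge> 0 \<and> lam2 \<ge> 0 \<and> Q \<ge> 1 \<and>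
      degree P1 = n1 \<and> real_of_int (height P1) \<le> Q powr lam1 \<and>
      degree P2 = n2 \<and> real_of_int (height P2) \<le> Q powr lam2 \<and>
      \<not> (\<exists>z::complex. poly (map_poly of_int P1) z = 0 \<and> poly (map_poly of_int P2) z = 0) \<and>
      eta > 0 \<and> a < b \<and> {a<..<b} \<subseteq> I \<and> I \<subseteq> {a..b} \<and> b - a = Q powr (- eta) \<and>
      I \<subseteq> {-1/2<..<1/2} \<and>
      (\<forall>x\<in>I. \<bar>poly (map_poly real_of_int P1) x\<bar> \<le> Q powr (- tau1) \<and>
               \<bar>poly (map_poly real_of_int P2) x\<bar> \<le> Q powr (- tau2)) \<and>
      Q > Q0
      \<longrightarrow> 3 * min (tau1 + lam1) (tau2 + lam2) - 2 * eta
            < real n1 * lam2 + real n2 * lam1 + \<delta>))"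
  apply (intro conjI allI impI)
  subgoal
    apply (rule exI[of _ "fact n * deriv_bound n ^ n"])
    apply (intro conjI allI impI)
     apply (simp add: deriv_bound_pos)
    apply (elim conjE)
    apply (rule one_le_perm_rect_matM)
    by (auto simp: abs_le_iff)
  subgoal for \<delta>
    apply (rule exI[of _ "max 1 ((fact n * (2 ^ (n + 1)) ^ 3 * deriv_bound n ^ n * 16) powr (1 / \<delta>))"])
    apply (intro allI impI, elim conjE)
    apply (rule lt_add_of_one_le_mult_powr[of "fact n * (2 ^ (n + 1)) ^ 3 * deriv_bound n ^ n * 16"])
       apply (simp add: deriv_bound_pos)
      apply assumption
     apply assumption
    apply (rule one_le_mult_powr_of_small_on_interval)
    by auto
  done

end
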